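(* Let $G=(V,E,I,\{s,t\})$ be a grapht (possibly infinite). Suppose $\mathcal{P}$ is a linkage of $s$ with $|\delta(t)\setminus E(\mathcal{P})|=1$, and that there is no linkage $\mathcal{P}'$ of $s$ with $\delta_{\mathcal{P}'}(t)\subsetneq\delta_{\mathcal{P}}(t)$. Then $|\delta(t)\setminus E(\mathcal{Q})|\le1$ for every linkage $\mathcal{Q}$ of $s$.
   Context: Graphs may have parallel edges but no loops; all paths are finite. Here the terminal set is $\{s,t\}$, so $T$-paths are $st$-paths. $\delta(x)$ is the set of edges incident with $x$. For a system $\mathcal{R}$ of paths, $E(\mathcal{R})$ is the union of their edge sets and $\delta_{\mathcal{R}}(t)=\delta(t)\cap E(\mathcal{R})$. A system of edge-disjoint $st$-paths links $s$ if it covers $\delta(s)$; it is a linkage of $s$ if it links $s$ and each of its paths contains an edge of $\delta(s)$ (minimal with respect to linking $s$). *)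

theory Defs
  imports Main
begin

text \<open>A graph (parallel edges allowed, no loops, possibly infinite) is given by a vertex
set V, an edge set E and an incidence map I sending each edge to its set of two ends.\<close>

definition is_graph :: "'v set \<Rightarrow> 'e set \<Rightarrow> ('e \<Rightarrow> 'v set) \<Rightarrow> bool" where
  "is_graph V E I \<longleftrightarrow> (\<forall>e\<in>E. I e \<subseteq> V \<and> card (I e) = 2)"

definition is_grapht :: "'v set \<Rightarrow> 'e set \<Rightarrow> ('e \<Rightarrow> 'v set) \<Rightarrow> 'v \<Rightarrow> 'v \<Rightarrow> bool" where
  "is_grapht V E I s t \<longleftrightarrow> is_graph V E I \<and> s \<in> V \<and> t \<in> V \<and> s \<noteq> t"

definition delta :: "'e set \<Rightarrow> ('e \<Rightarrow> 'v set) \<Rightarrow> 'v \<Rightarrow> 'e set" where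
  "delta E I x = {e \<in> E. x \<in> I e}"

definition is_path :: "'v set \<Rightarrow> 'e set \<Rightarrow> ('e \<Rightarrow> 'v set) \<Rightarrow> 'v list \<times> 'e list \<Rightarrow> bool" where
  "is_path V E I p \<longleftrightarrow> (case p of (vs, es) \<Rightarrow>
      vs \<noteq> [] \<and> length es = length vs - 1 \<and> distinct vs \<and> set vs \<subseteq> V \<and> set es \<subseteq> E \<and>
      (\<forall>i < length es. I (es ! i) = {vs ! i, vs ! Suc i}))"

definition st_path :: "'v set \<Rightarrow> 'e set \<Rightarrow> ('e \<Rightarrow> 'v set) \<Rightarrow> 'v \<Rightarrow> 'v \<Rightarrow> 'v list \<times> 'e list \<Rightarrow> bool" where
  "st_path V E I s t p \<longleftrightarrow> is_path V E I p \<and> hd (fst p) = s \<and> last (fst p) = t"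

definition path_edges :: "'v list \<times> 'e list \<Rightarrow> 'e set" where
  "path_edges p = set (snd p)"

definition sys_edges :: "('v list \<times> 'e list) set \<Rightarrow> 'e set" where
  "sys_edges R = (\<Union>p\<in>R. path_edges p)"

definition delta_sys :: "'e set \<Rightarrow> ('e \<Rightarrow> 'v set) \<Rightarrow> ('v list \<times> 'e list) set \<Rightarrow> 'v \<Rightarrow> 'e set" where
  "delta_sys E I R x = delta E I x \<inter> sys_edges R"

definition edge_disjoint_st_system ::
  "'v set \<Rightarrow> 'e set \<Rightarrow> ('e \<Rightarrow> 'v set) \<Rightarrow> 'v \<Rightarrow> 'v \<Rightarrow> ('v list \<times> 'e list) set \<Rightarrow> bool" where
  "edge_disjoint_st_system V E I s t R \<longleftrightarrow>
     (\<forall>p\<in>R. st_path V E I s t p) \<and>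
     (\<forall>p\<in>R. \<forall>q\<in>R. p \<noteq> q \<longrightarrow> path_edges p \<inter> path_edges q = {})"

definition links ::
  "'v set \<Rightarrow> 'e set \<Rightarrow> ('e \<Rightarrow> 'v set) \<Rightarrow> 'v \<Rightarrow> 'v \<Rightarrow> ('v list \<times> 'e list) set \<Rightarrow> bool" where
  "links V E I s t R \<longleftrightarrow> edge_disjoint_st_system V E I s t R \<and> delta E I s \<subseteq> sys_edges R"

definition linkage ::
  "'v set \<Rightarrow> 'e set \<Rightarrow> ('e \<Rightarrow> 'v set) \<Rightarrow> 'v \<Rightarrow> 'v \<Rightarrow> ('v list \<times> 'e list) set \<Rightarrow> bool" where
  "linkage V E I s t R \<longleftrightarrow> links V E I s t R \<and>
     (\<forall>p\<in>R. path_edges p \<inter> delta E I s \<noteq> {})"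

end

theory Submission
  imports Defs
begin

text \<open>
  Let f be the only edge at t not used by P, and suppose that a linkage Q misses two edges g, g'
  at t. If Q does not use f, its ends at t form a proper subset of those of P. Otherwise delete
  the path of Q through f, leaving a system B, and let S be the set of vertices reachable from s
  by B-augmenting paths avoiding t. If some edge h \<noteq> f at t, unused by B, has its other end in S,
  augmenting B along such a path gives a linkage whose ends at t are those of B together with h.
  Otherwise S is a cut: each path of P leaves S either directly into t through an edge of B, or
  through an edge that some path of B traverses outwards, never to return to S; following that
  path of B from there on reroutes P into a linkage whose ends at t are ends of B. Either way the
  new linkage avoids f and one of g, g', contradicting the minimality of P.

  Augmentation also works when B is infinite, because it only ever touches finitely many paths:
  it is an induction on the number of edges the augmenting path shares with B, and each step
  exchanges segments between the augmenting path and a single path of B.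
\<close>

lemma in_set_dropE:
  assumes "x \<in> set (drop n xs)"
  obtains i where "n \<le> i" "i < length xs" "xs ! i = x"
proof -
  obtain k where "k < length (drop n xs)" "drop n xs ! k = x"
    using assms by (auto simp: in_set_conv_nth)
  then show ?thesis using that[of "n + k"] by simp
qed

lemma nth_in_set_drop: "n \<le> m \<Longrightarrow> m < length xs \<Longrightarrow> xs ! m \<in> set (drop n xs)"
  using nth_mem[of "m - n" "drop n xs"] by simp

lemma nth_in_set_take: "m < n \<Longrightarrow> m < length xs \<Longrightarrow> xs ! m \<in> set (take n xs)"
  using nth_mem[of m "take n xs"] by simp

lemma first_meet:
  assumes "xs ! a0 \<in> set (drop b0 ys)"
  obtains a b where "a \<le> a0" "b0 \<le> b" "b < length ys" "xs ! a = ys ! b"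
    "set (take a xs) \<inter> set (drop b ys) = {}"
proof -
  define a where "a = (LEAST a. xs ! a \<in> set (drop b0 ys))"
  have a: "xs ! a \<in> set (drop b0 ys)" "a \<le> a0"
    unfolding a_def using assms by (rule LeastI, rule Least_le)
  then obtain b where b: "b0 \<le> b" "b < length ys" "xs ! a = ys ! b"
    by (auto elim: in_set_dropE)
  have "set (take a xs) \<inter> set (drop b ys) = {}"
  proof (rule ccontr)
    assume "set (take a xs) \<inter> set (drop b ys) \<noteq> {}"
    then obtain z where z: "z \<in> set (take a xs)" "z \<in> set (drop b ys)" by blast
    then obtain m where "m < a" "xs ! m = z" by (auto simp: in_set_conv_nth)
    with z(2) have "m < a" "xs ! m \<in> set (drop b ys)" by simp_all
    moreover have "set (drop b ys) \<subseteq> set (drop b0 ys)"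
      using b(1) by (simp add: set_drop_subset_set_drop)
    ultimately show False using not_less_Least[of m] unfolding a_def by blast
  qed
  with a(2) b show ?thesis by (rule that)
qed

lemma first_index_in:
  assumes "set xs \<inter> A \<noteq> {}" "hd xs \<notin> A" "last xs \<notin> A"
  obtains i where "0 < i" "Suc i < length xs" "xs ! i \<in> A" "set (take i xs) \<inter> A = {}"
proof -
  have ex: "\<exists>i. i < length xs \<and> xs ! i \<in> A"
    using assms(1) by (auto simp: in_set_conv_nth)
  define i where "i = (LEAST i. i < length xs \<and> xs ! i \<in> A)"
  have i: "i < length xs" "xs ! i \<in> A"
    using LeastI_ex[OF ex] unfolding i_def by simp_all
  have before: "xs ! m \<notin> A" if "m < i" for m
    using not_less_Least[of m "\<lambda>i. i < length xs \<and> xs ! i \<in> A"] that i(1) unfolding i_def by simp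
  have "xs \<noteq> []" using i(1) by auto
  then have "hd xs = xs ! 0" "last xs = xs ! (length xs - 1)"
    by (simp_all add: hd_conv_nth last_conv_nth)
  then have "i \<noteq> 0" "i \<noteq> length xs - 1"
    using i(2) assms(2,3) by (metis, metis)
  moreover have "set (take i xs) \<inter> A = {}"
    using before by (auto simp: in_set_conv_nth)
  ultimately show ?thesis
    using i by (intro that) auto
qed

lemma first_exit:
  assumes "xs ! 0 \<in> S" "xs ! n \<notin> S" "n < length xs"
  obtains i where "i < n" "set (take (Suc i) xs) \<subseteq> S" "xs ! Suc i \<notin> S"
proof -
  have "n \<noteq> 0" using assms(1,2) by (metis)
  then have ex: "xs ! Suc (n - 1) \<notin> S" using assms(2) by simp
  define i where "i = (LEAST i. xs ! Suc i \<notin> S)"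
  have i: "xs ! Suc i \<notin> S" "i \<le> n - 1"
    unfolding i_def using ex by (rule LeastI, rule Least_le)
  have "xs ! m \<in> S" if "m \<le> i" for m
  proof (cases m)
    case (Suc m')
    then show ?thesis
      using not_less_Least[of m' "\<lambda>i. xs ! Suc i \<notin> S"] that unfolding i_def by simp
  qed (use assms(1) in simp)
  then have "set (take (Suc i) xs) \<subseteq> S" by (auto simp: in_set_conv_nth)
  moreover have "i < n" using i(2) \<open>n \<noteq> 0\<close> by simp
  ultimately show ?thesis using that i(1) by blast
qed

definition first_edge :: "'v list \<times> 'e list \<Rightarrow> 'e" where
  "first_edge p = hd (snd p)"

definition last_edge :: "'v list \<times> 'e list \<Rightarrow> 'e" where
  "last_edge p = last (snd p)"

definition steps :: "'v list \<times> 'e list \<Rightarrow> ('e \<times> 'v \<times> 'v) list" where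
  "steps p = map (\<lambda>i. (snd p ! i, fst p ! i, fst p ! Suc i)) [0..<length (snd p)]"

lemma in_set_steps:
  "(e, x, y) \<in> set (steps (vs, es)) \<longleftrightarrow> (\<exists>i < length es. es ! i = e \<and> vs ! i = x \<and> vs ! Suc i = y)"
  by (auto simp: steps_def)

lemma map_fst_steps: "map fst (steps p) = snd p"
  by (simp add: steps_def comp_def map_nth)

lemma step_edge_in_take:
  assumes "(e, x, y) \<in> set (take n (steps p))"
  shows "e \<in> set (take n (snd p))"
proof -
  have "e \<in> set (map fst (take n (steps p)))" using assms by force
  then show ?thesis by (simp only: take_map[symmetric] map_fst_steps)
qed

lemma step_edge_in_drop:
  assumes "(e, x, y) \<in> set (drop n (steps p))"
  shows "e \<in> set (drop n (snd p))"
proof -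
  have "e \<in> set (map fst (drop n (steps p)))" using assms by force
  then show ?thesis by (simp only: drop_map[symmetric] map_fst_steps)
qed

lemma steps_snoc:
  assumes "length vs = Suc (length es)"
  shows "steps (vs @ [x], es @ [e]) = steps (vs, es) @ [(e, last vs, x)]"
proof -
  have "vs \<noteq> []" using assms by auto
  then have "last vs = vs ! length es" using assms by (simp add: last_conv_nth)
  then show ?thesis using assms by (simp add: steps_def nth_append)
qed

lemma steps_take:
  assumes "length vs = Suc (length es)" "k < length vs"
  shows "steps (take (Suc k) vs, take k es) = take k (steps (vs, es))"
  using assms by (cases "k = length es") (simp_all add: steps_def take_map min_def)

lemma is_path_iff:
  "is_path V E I (vs, es) \<longleftrightarrow> length vs = Suc (length es) \<and> distinct vs \<and> set vs \<subseteq> V \<and>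
     set es \<subseteq> E \<and> (\<forall>e x y. (e, x, y) \<in> set (steps (vs, es)) \<longrightarrow> I e = {x, y})"
proof -
  have "(\<forall>e x y. (e, x, y) \<in> set (steps (vs, es)) \<longrightarrow> I e = {x, y}) \<longleftrightarrow>
      (\<forall>i < length es. I (es ! i) = {vs ! i, vs ! Suc i})"
    unfolding in_set_steps by blast
  then show ?thesis by (cases vs) (auto simp: is_path_def)
qed

lemma is_path_distinct_edges:
  assumes "is_path V E I (vs, es)"
  shows "distinct es"
  unfolding distinct_conv_nth
proof (intro allI impI)
  fix i j assume ij: "i < length es" "j < length es" "i \<noteq> j"
  have len: "length vs = Suc (length es)" and dist: "distinct vs"
    using assms by (auto simp: is_path_iff)
  have ends: "I (es ! k) = {vs ! k, vs ! Suc k}" if "k < length es" for k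
    using assms that by (auto simp: is_path_def)
  show "es ! i \<noteq> es ! j"
  proof
    assume "es ! i = es ! j"
    then have "{vs ! i, vs ! Suc i} = {vs ! j, vs ! Suc j}"
      using ends ij by metis
    then have "i = Suc j \<and> j = Suc i"
      using ij len nth_eq_iff_index_eq[OF dist] by (auto simp: doubleton_eq_iff)
    then show False by linarith
  qed
qed

lemma is_path_snoc:
  assumes "is_path V E I (vs, es)" "x \<notin> set vs" "x \<in> V" "e \<in> E" "I e = {last vs, x}"
  shows "is_path V E I (vs @ [x], es @ [e])"
  using assms steps_snoc[of vs es x e] unfolding is_path_iff by auto

lemma is_path_take:
  assumes "is_path V E I (vs, es)" "k < length vs"
  shows "is_path V E I (take (Suc k) vs, take k es)"
proof -
  have len: "length vs = Suc (length es)" using assms(1) by (simp add: is_path_iff)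
  have "set (steps (take (Suc k) vs, take k es)) \<subseteq> set (steps (vs, es))"
    using steps_take[OF len assms(2)] by (simp add: set_take_subset)
  then show ?thesis
    using assms len unfolding is_path_iff by (auto dest: in_set_takeD)
qed

lemma edge_ends_in_drop:
  assumes "is_path V E I (vs, es)" "e \<in> set (drop n es)"
  shows "I e \<subseteq> set (drop n vs)"
proof -
  have len: "length vs = Suc (length es)" using assms(1) by (simp add: is_path_iff)
  obtain m where m: "n \<le> m" "m < length es" "es ! m = e" using assms(2) by (rule in_set_dropE)
  have "(e, vs ! m, vs ! Suc m) \<in> set (steps (vs, es))"
    using m unfolding in_set_steps by blast
  then have "I e = {vs ! m, vs ! Suc m}" using assms(1) unfolding is_path_iff by blast
  moreover have "vs ! m \<in> set (drop n vs)" "vs ! Suc m \<in> set (drop n vs)"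
    using m len by (simp_all add: nth_in_set_drop)
  ultimately show ?thesis by simp
qed

lemma st_path_length:
  assumes "st_path V E I s t (vs, es)"
  shows "length vs = Suc (length es)"
  using assms by (simp add: st_path_def is_path_iff)

lemma st_path_nth_eq_s:
  assumes "st_path V E I s t (vs, es)" "m < length vs"
  shows "vs ! m = s \<longleftrightarrow> m = 0"
  using assms nth_eq_iff_index_eq[of vs m 0]
  by (auto simp: st_path_def is_path_def hd_conv_nth)

lemma st_path_nth_eq_t:
  assumes "st_path V E I s t (vs, es)" "m < length vs"
  shows "vs ! m = t \<longleftrightarrow> m = length es"
  using assms nth_eq_iff_index_eq[of vs m "length vs - 1"]
  by (auto simp: st_path_def is_path_def last_conv_nth)

lemma st_path_edges_nonempty:
  assumes "st_path V E I s t (vs, es)" "s \<noteq> t"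
  shows "es \<noteq> []"
  using assms st_path_nth_eq_s[OF assms(1), of 0] st_path_nth_eq_t[OF assms(1), of 0]
  by (auto simp: st_path_length)

lemma st_path_edge_ends:
  assumes "st_path V E I s t (vs, es)" "i < length es"
  shows "I (es ! i) = {vs ! i, vs ! Suc i}" "es ! i \<in> E"
  using assms by (auto simp: st_path_def is_path_def)

lemma st_path_edge_at_s:
  assumes "st_path V E I s t p" "e \<in> set (snd p)" "s \<in> I e"
  shows "e = first_edge p"
proof -
  obtain vs es where p: "p = (vs, es)" by (cases p)
  obtain i where i: "i < length es" "e = es ! i" using assms(2) p by (auto simp: in_set_conv_nth)
  have "vs ! i = s \<or> vs ! Suc i = s"
    using st_path_edge_ends[OF assms(1)[unfolded p] i(1)] i(2) assms(3) by auto
  then have "i = 0"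
    using st_path_nth_eq_s[OF assms(1)[unfolded p]] i(1) st_path_length[OF assms(1)[unfolded p]] by force
  then show ?thesis using i p by (simp add: first_edge_def hd_conv_nth)
qed

lemma st_path_edge_at_t:
  assumes "st_path V E I s t p" "e \<in> set (snd p)" "t \<in> I e"
  shows "e = last_edge p"
proof -
  obtain vs es where p: "p = (vs, es)" by (cases p)
  obtain i where i: "i < length es" "e = es ! i" using assms(2) p by (auto simp: in_set_conv_nth)
  have "vs ! i = t \<or> vs ! Suc i = t"
    using st_path_edge_ends[OF assms(1)[unfolded p] i(1)] i(2) assms(3) by auto
  then have "Suc i = length es"
    using st_path_nth_eq_t[OF assms(1)[unfolded p]] i(1) st_path_length[OF assms(1)[unfolded p]] by force
  then have "es \<noteq> []" "i = length es - 1" by auto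
  then show ?thesis using i p by (simp add: last_edge_def last_conv_nth)
qed

lemma st_path_end_edges:
  assumes "st_path V E I s t p" "s \<noteq> t"
  shows "first_edge p \<in> delta E I s" "first_edge p \<in> set (snd p)"
    "last_edge p \<in> delta E I t" "last_edge p \<in> set (snd p)"
proof -
  obtain vs es where p: "p = (vs, es)" by (cases p)
  note path = assms(1)[unfolded p]
  have ne: "es \<noteq> []" using st_path_edges_nonempty[OF path assms(2)] .
  have len: "length vs = Suc (length es)" using st_path_length[OF path] .
  have "vs ! 0 = s" using st_path_nth_eq_s[OF path, of 0] len by simp
  moreover have "I (hd es) = {vs ! 0, vs ! Suc 0}" "hd es \<in> E"
    using st_path_edge_ends[OF path, of 0] ne by (simp_all add: hd_conv_nth)
  ultimately show "first_edge p \<in> delta E I s"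
    by (simp add: p first_edge_def delta_def)
  have "vs ! Suc (length es - 1) = t" using st_path_nth_eq_t[OF path, of "length es"] len ne by simp
  moreover have "I (last es) = {vs ! (length es - 1), vs ! Suc (length es - 1)}" "last es \<in> E"
    using st_path_edge_ends[OF path, of "length es - 1"] ne by (simp_all add: last_conv_nth)
  ultimately show "last_edge p \<in> delta E I t"
    by (simp add: p last_edge_def delta_def)
  show "first_edge p \<in> set (snd p)" "last_edge p \<in> set (snd p)"
    using ne by (simp_all add: p first_edge_def last_edge_def)
qed

definition splice_path :: "'v list \<times> 'e list \<Rightarrow> nat \<Rightarrow> 'v list \<times> 'e list \<Rightarrow> nat \<Rightarrow> 'v list \<times> 'e list" where
  "splice_path p a q b = (take a (fst p) @ drop b (fst q), take a (snd p) @ drop b (snd q))"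

lemma steps_splice:
  assumes "length vs = Suc (length es)" "length ws = Suc (length ds)"
    and "a \<le> length es" "b \<le> length ds" "vs ! a = ws ! b"
  shows "steps (splice_path (vs, es) a (ws, ds) b) = take a (steps (vs, es)) @ drop b (steps (ws, ds))"
proof (rule nth_equalityI)
  show "length (steps (splice_path (vs, es) a (ws, ds) b)) =
      length (take a (steps (vs, es)) @ drop b (steps (ws, ds)))"
    using assms by (simp add: steps_def splice_path_def)
next
  fix i assume "i < length (steps (splice_path (vs, es) a (ws, ds) b))"
  then have i: "i < a + (length ds - b)" using assms by (simp add: steps_def splice_path_def)
  show "steps (splice_path (vs, es) a (ws, ds) b) ! i = (take a (steps (vs, es)) @ drop b (steps (ws, ds))) ! i"
  proof (cases "Suc i < a")
    case True
    then have "i < length es" using assms by simp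
    then show ?thesis using True assms i by (simp add: steps_def splice_path_def nth_append)
  next
    case False
    then consider "Suc i = a" | "a \<le> i" "b + i - a < length ds" using i by linarith
    then show ?thesis
      using assms i by cases (simp_all add: steps_def splice_path_def nth_append Suc_diff_le)
  qed
qed

lemma is_path_splice:
  assumes p: "is_path V E I (vs, es)" and q: "is_path V E I (ws, ds)"
    and "a \<le> length es" "b \<le> length ds" "vs ! a = ws ! b"
    and disj: "set (take a vs) \<inter> set (drop b ws) = {}"
  shows "is_path V E I (splice_path (vs, es) a (ws, ds) b)"
proof -
  define us fs where "us = take a vs @ drop b ws" and "fs = take a es @ drop b ds"
  have sp: "splice_path (vs, es) a (ws, ds) b = (us, fs)"
    by (simp add: splice_path_def us_def fs_def)
  have len: "length vs = Suc (length es)" "length ws = Suc (length ds)"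
    using p q by (auto simp: is_path_iff)
  have "set (steps (us, fs)) \<subseteq> set (steps (vs, es)) \<union> set (steps (ws, ds))"
    using steps_splice[OF len assms(3-5)] set_take_subset set_drop_subset unfolding sp by fastforce
  then have "\<forall>e x y. (e, x, y) \<in> set (steps (us, fs)) \<longrightarrow> I e = {x, y}"
    using p q unfolding is_path_iff by blast
  moreover have "set us \<subseteq> V" "set fs \<subseteq> E"
    using p q unfolding us_def fs_def is_path_iff by (auto dest: in_set_takeD in_set_dropD)
  moreover have "length us = Suc (length fs)"
    using assms(3,4) len unfolding us_def fs_def by simp
  moreover have "distinct us"
    using p q disj unfolding us_def is_path_iff by simp
  ultimately show ?thesis unfolding sp is_path_iff by blast
qed

lemma st_path_splice:
  assumes "st_path V E I s t (vs, es)" "st_path V E I s t (ws, ds)"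
    and "a \<le> length es" "b \<le> length ds" "vs ! a = ws ! b"
    and "set (take a vs) \<inter> set (drop b ws) = {}"
  shows "st_path V E I s t (splice_path (vs, es) a (ws, ds) b)"
proof -
  have "hd (take a vs @ drop b ws) = s"
    using assms st_path_length[OF assms(1)] st_path_length[OF assms(2)] st_path_nth_eq_s[OF assms(1), of 0]
    by (cases "a = 0") (auto simp: st_path_def hd_append hd_drop_conv_nth)
  moreover have "last (take a vs @ drop b ws) = t"
    using assms st_path_length[OF assms(2)] by (simp add: st_path_def)
  moreover have "is_path V E I (splice_path (vs, es) a (ws, ds) b)"
    using is_path_splice[OF _ _ assms(3-6)] assms(1,2) by (simp add: st_path_def)
  ultimately show ?thesis by (simp add: st_path_def splice_path_def)
qed

lemma first_edge_splice:
  "0 < a \<Longrightarrow> es \<noteq> [] \<Longrightarrow> first_edge (splice_path (vs, es) a (ws, ds) b) = first_edge (vs, es)"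
  by (simp add: first_edge_def splice_path_def)

lemma last_edge_splice:
  "b < length ds \<Longrightarrow> last_edge (splice_path (vs, es) a (ws, ds) b) = last_edge (ws, ds)"
  by (simp add: last_edge_def splice_path_def)

lemma st_path_splice_first_meet:
  assumes p: "st_path V E I s t (vs, es)" and q: "st_path V E I s t (ws, ds)"
    and "a0 < length es" "0 < b0" "vs ! a0 \<in> set (drop b0 ws)"
  obtains a b where "0 < a" "a \<le> a0" "b0 \<le> b" "b < length ds"
    "st_path V E I s t (splice_path (vs, es) a (ws, ds) b)"
    "first_edge (splice_path (vs, es) a (ws, ds) b) = hd es"
    "last_edge (splice_path (vs, es) a (ws, ds) b) = last ds"
    "steps (splice_path (vs, es) a (ws, ds) b) = take a (steps (vs, es)) @ drop b (steps (ws, ds))"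
proof -
  have len: "length vs = Suc (length es)" "length ws = Suc (length ds)"
    using st_path_length[OF p] st_path_length[OF q] .
  obtain a b where ab: "a \<le> a0" "b0 \<le> b" "b < length ws" "vs ! a = ws ! b"
    "set (take a vs) \<inter> set (drop b ws) = {}"
    using first_meet[OF assms(5)] .
  have "a \<noteq> 0"
    using ab assms(4) st_path_nth_eq_s[OF p, of 0] st_path_nth_eq_s[OF q, of b] len by auto
  moreover have "b \<noteq> length ds"
    using ab assms(3) st_path_nth_eq_t[OF p, of a] st_path_nth_eq_t[OF q, of b] len by auto
  ultimately have a: "0 < a" and b: "b < length ds" using ab(3) len by simp_all
  have "es \<noteq> []" using assms(3) by auto
  show ?thesis
  proof (rule that[OF a ab(1,2) b])
    show "st_path V E I s t (splice_path (vs, es) a (ws, ds) b)"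
      using st_path_splice[OF p q _ _ ab(4,5)] ab(1) assms(3) b by simp
    show "first_edge (splice_path (vs, es) a (ws, ds) b) = hd es"
      using first_edge_splice[OF a \<open>es \<noteq> []\<close>] by (simp add: first_edge_def)
    show "last_edge (splice_path (vs, es) a (ws, ds) b) = last ds"
      using last_edge_splice[OF b] by (simp add: last_edge_def)
    show "steps (splice_path (vs, es) a (ws, ds) b) = take a (steps (vs, es)) @ drop b (steps (ws, ds))"
      using steps_splice[OF len _ _ ab(4)] ab(1) assms(3) b by simp
  qed
qed

lemma sys_edges_iff: "e \<in> sys_edges R \<longleftrightarrow> (\<exists>p\<in>R. e \<in> set (snd p))"
  by (simp add: sys_edges_def path_edges_def)

lemma sys_edgesI: "p \<in> R \<Longrightarrow> e \<in> set (snd p) \<Longrightarrow> e \<in> sys_edges R"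
  by (auto simp: sys_edges_iff)

lemma sys_edgesE: "e \<in> sys_edges R \<Longrightarrow> (\<And>p. p \<in> R \<Longrightarrow> e \<in> set (snd p) \<Longrightarrow> P) \<Longrightarrow> P"
  by (auto simp: sys_edges_iff)

lemma st_system_path:
  "edge_disjoint_st_system V E I s t R \<Longrightarrow> p \<in> R \<Longrightarrow> st_path V E I s t p"
  by (simp add: edge_disjoint_st_system_def)

lemma st_system_edge_unique:
  "edge_disjoint_st_system V E I s t R \<Longrightarrow> p \<in> R \<Longrightarrow> q \<in> R \<Longrightarrow>
    e \<in> set (snd p) \<Longrightarrow> e \<in> set (snd q) \<Longrightarrow> p = q"
  unfolding edge_disjoint_st_system_def path_edges_def by blast

lemma st_system_subset:
  "edge_disjoint_st_system V E I s t R \<Longrightarrow> R' \<subseteq> R \<Longrightarrow> edge_disjoint_st_system V E I s t R'"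
  unfolding edge_disjoint_st_system_def by blast

lemma st_system_insert:
  assumes "edge_disjoint_st_system V E I s t B" "st_path V E I s t W"
    and "set (snd W) \<inter> sys_edges B = {}"
  shows "edge_disjoint_st_system V E I s t (insert W B)"
  using assms unfolding edge_disjoint_st_system_def sys_edges_def path_edges_def by blast

lemma st_system_replace:
  assumes B: "edge_disjoint_st_system V E I s t B" and q: "q \<in> B"
    and q': "st_path V E I s t q'" and own: "set (snd q') \<inter> sys_edges B \<subseteq> set (snd q)"
  shows "edge_disjoint_st_system V E I s t (insert q' (B - {q}))"
proof -
  have "set (snd q') \<inter> sys_edges (B - {q}) = {}"
  proof (intro equalityI subsetI)
    fix e assume e: "e \<in> set (snd q') \<inter> sys_edges (B - {q})"
    then have "e \<in> sys_edges (B - {q})" by simp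
    then obtain r where r: "r \<in> B - {q}" "e \<in> set (snd r)" by (rule sys_edgesE)
    have "e \<in> set (snd q)" using e own r by (auto intro: sys_edgesI)
    then show "e \<in> {}" using st_system_edge_unique[OF B _ q r(2)] r(1) by auto
  qed simp
  moreover have "edge_disjoint_st_system V E I s t (B - {q})"
    by (rule st_system_subset[OF B]) auto
  ultimately show ?thesis using st_system_insert[OF _ q'] by simp
qed

lemma sys_edges_replace: "sys_edges (insert q' (B - {q})) \<subseteq> set (snd q') \<union> sys_edges B"
  unfolding sys_edges_def path_edges_def by auto

lemma replace_prefix_unused:
  assumes B: "edge_disjoint_st_system V E I s t B" and q: "(vs, es) \<in> B"
    and "set (snd q') \<inter> set (take k es) = {}"
  shows "set (take k es) \<inter> sys_edges (insert q' (B - {(vs, es)})) = {}"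
proof (intro equalityI subsetI)
  fix e assume e: "e \<in> set (take k es) \<inter> sys_edges (insert q' (B - {(vs, es)}))"
  then have "e \<in> sys_edges (insert q' (B - {(vs, es)}))" by simp
  then obtain r where r: "r \<in> insert q' (B - {(vs, es)})" "e \<in> set (snd r)" by (rule sys_edgesE)
  have "r \<noteq> q'" using e r(2) assms(3) by auto
  then have "r \<in> B" "r \<noteq> (vs, es)" using r(1) by auto
  moreover have "e \<in> set es" using e by (auto dest: in_set_takeD)
  ultimately show "e \<in> {}" using st_system_edge_unique[OF B \<open>r \<in> B\<close> q r(2)] by simp
qed simp

lemma st_system_image:
  assumes "\<And>p. p \<in> P \<Longrightarrow> st_path V E I s t (F p)"
    and "\<And>p p' e. p \<in> P \<Longrightarrow> p' \<in> P \<Longrightarrow> e \<in> set (snd (F p)) \<Longrightarrow> e \<in> set (snd (F p')) \<Longrightarrow> p = p'"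
  shows "edge_disjoint_st_system V E I s t (F ` P)"
  unfolding edge_disjoint_st_system_def path_edges_def
proof (intro conjI ballI impI)
  fix r assume "r \<in> F ` P"
  then show "st_path V E I s t r" using assms(1) by auto
next
  fix r r' assume r: "r \<in> F ` P" "r' \<in> F ` P" "r \<noteq> r'"
  then obtain p p' where p: "p \<in> P" "p' \<in> P" "r = F p" "r' = F p'" by blast
  then show "set (snd r) \<inter> set (snd r') = {}" using assms(2)[OF p(1,2)] r(3) by blast
qed

lemma delta_sys_eq_last_edges:
  assumes "s \<noteq> t" "edge_disjoint_st_system V E I s t R"
  shows "delta_sys E I R t = last_edge ` R"
proof
  show "delta_sys E I R t \<subseteq> last_edge ` R"
  proof
    fix e assume "e \<in> delta_sys E I R t"
    then have "\<exists>p\<in>R. e \<in> set (snd p) \<and> t \<in> I e"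
      by (simp add: delta_sys_def delta_def sys_edges_iff)
    then obtain p where p: "p \<in> R" "e \<in> set (snd p)" and "t \<in> I e" by blast
    then have "e = last_edge p"
      using st_path_edge_at_t[OF st_system_path[OF assms(2) p(1)] p(2)] by simp
    then show "e \<in> last_edge ` R" using p(1) by simp
  qed
  show "last_edge ` R \<subseteq> delta_sys E I R t"
  proof
    fix e assume "e \<in> last_edge ` R"
    then obtain p where p: "p \<in> R" "e = last_edge p" by blast
    then show "e \<in> delta_sys E I R t"
      using st_path_end_edges(3,4)[OF st_system_path[OF assms(2) p(1)] assms(1)]
      unfolding delta_sys_def Int_iff sys_edges_iff by blast
  qed
qed

lemma linkage_iff_first_edges:
  assumes "s \<noteq> t" "edge_disjoint_st_system V E I s t R"
  shows "linkage V E I s t R \<longleftrightarrow> delta E I s \<subseteq> first_edge ` R"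
proof
  assume "linkage V E I s t R"
  then have "delta E I s \<subseteq> sys_edges R" by (simp add: linkage_def links_def)
  show "delta E I s \<subseteq> first_edge ` R"
  proof
    fix e assume e: "e \<in> delta E I s"
    then have "\<exists>p\<in>R. e \<in> set (snd p)"
      using \<open>delta E I s \<subseteq> sys_edges R\<close> by (auto simp: sys_edges_iff)
    then obtain p where p: "p \<in> R" "e \<in> set (snd p)" by blast
    then have "e = first_edge p"
      using st_path_edge_at_s[OF st_system_path[OF assms(2) p(1)] p(2)] e by (simp add: delta_def)
    then show "e \<in> first_edge ` R" using p(1) by simp
  qed
next
  assume first: "delta E I s \<subseteq> first_edge ` R"
  have ends: "first_edge p \<in> delta E I s" "first_edge p \<in> set (snd p)" if "p \<in> R" for p
    using st_path_end_edges(1,2)[OF st_system_path[OF assms(2) that] assms(1)] by simp_all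
  show "linkage V E I s t R"
    unfolding linkage_def links_def
  proof (intro conjI ballI subsetI)
    fix e assume "e \<in> delta E I s"
    then obtain p where "p \<in> R" "e = first_edge p" using first by blast
    then show "e \<in> sys_edges R" using ends(2) unfolding sys_edges_iff by blast
  next
    fix p assume "p \<in> R"
    then show "path_edges p \<inter> delta E I s \<noteq> {}" using ends[of p] unfolding path_edges_def by blast
  qed (rule assms(2))
qed

lemma first_edges_used:
  assumes "s \<noteq> t" "edge_disjoint_st_system V E I s t B"
  shows "first_edge ` B \<subseteq> sys_edges B"
  using st_path_end_edges(2)[OF st_system_path[OF assms(2)] assms(1)] by (auto intro: sys_edgesI)

lemma image_insert_remove: "x \<in> A \<Longrightarrow> f y = f x \<Longrightarrow> f ` insert y (A - {x}) = f ` A"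
  by (auto simp: image_iff)

lemma image_remove_insert: "x \<in> A \<Longrightarrow> f ` A = insert (f x) (f ` (A - {x}))"
  by auto

section \<open>Augmenting paths\<close>

definition traverses :: "('v list \<times> 'e list) set \<Rightarrow> 'e \<Rightarrow> 'v \<Rightarrow> 'v \<Rightarrow> bool" where
  "traverses R e x y \<longleftrightarrow> (\<exists>q\<in>R. (e, x, y) \<in> set (steps q))"

lemma traversesI: "q \<in> R \<Longrightarrow> (e, x, y) \<in> set (steps q) \<Longrightarrow> traverses R e x y"
  by (auto simp: traverses_def)

text \<open>The augmenting paths of the Ford-Fulkerson method with respect to the system R.\<close>

definition residual_path :: "('v list \<times> 'e list) set \<Rightarrow> 'v list \<times> 'e list \<Rightarrow> bool" where
  "residual_path R W \<longleftrightarrow>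
     (\<forall>e x y. (e, x, y) \<in> set (steps W) \<longrightarrow> e \<notin> sys_edges R \<or> traverses R e y x)"

lemma traverses_either_way:
  assumes "edge_disjoint_st_system V E I s t R" "e \<in> sys_edges R" "I e = {x, y}"
  shows "traverses R e x y \<or> traverses R e y x"
proof -
  obtain vs es where q: "(vs, es) \<in> R" "e \<in> set es"
    using assms(2) by (auto simp: sys_edges_iff)
  then obtain j where j: "j < length es" "es ! j = e" by (auto simp: in_set_conv_nth)
  then have step: "(e, vs ! j, vs ! Suc j) \<in> set (steps (vs, es))"
    unfolding in_set_steps by blast
  have "{vs ! j, vs ! Suc j} = {x, y}"
    using st_path_edge_ends(1)[OF st_system_path[OF assms(1) q(1)] j(1)] j(2) assms(3) by simp
  then consider "vs ! j = x" "vs ! Suc j = y" | "vs ! j = y" "vs ! Suc j = x"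
    unfolding doubleton_eq_iff by blast
  then show ?thesis
    using step q(1) unfolding traverses_def by cases auto
qed

lemma not_traverses_into_s:
  assumes "edge_disjoint_st_system V E I s t R"
  shows "\<not> traverses R e x s"
proof
  assume "traverses R e x s"
  then obtain vs es j where q: "(vs, es) \<in> R" and j: "j < length es" "vs ! Suc j = s"
    by (auto simp: traverses_def in_set_steps)
  note path = st_system_path[OF assms q]
  have "Suc j < length vs" using j(1) st_path_length[OF path] by simp
  then show False using st_path_nth_eq_s[OF path] j(2) by simp
qed

lemma residual_first_edge_unused:
  assumes B: "edge_disjoint_st_system V E I s t B" and W: "st_path V E I s t W" "s \<noteq> t"
    and res: "residual_path B W"
  shows "first_edge W \<notin> sys_edges B"
proof -
  obtain vs es where W_eq: "W = (vs, es)" by (cases W)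
  note path = W(1)[unfolded W_eq]
  have "es \<noteq> []" using st_path_edges_nonempty[OF path W(2)] .
  moreover have len: "length vs = Suc (length es)" using st_path_length[OF path] .
  ultimately have "(hd es, vs ! 0, vs ! Suc 0) \<in> set (steps W)"
    unfolding W_eq in_set_steps by (intro exI[of _ 0]) (simp add: hd_conv_nth)
  then have "hd es \<notin> sys_edges B \<or> traverses B (hd es) (vs ! Suc 0) (vs ! 0)"
    using res unfolding residual_path_def by blast
  moreover have "vs ! 0 = s" using st_path_nth_eq_s[OF path, of 0] len by simp
  ultimately show ?thesis
    using not_traverses_into_s[OF B] unfolding W_eq first_edge_def by auto
qed

lemma residual_path_snoc:
  assumes "residual_path B (vs, es)" "length vs = Suc (length es)"
    and "e \<notin> sys_edges B \<or> traverses B e x (last vs)"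
  shows "residual_path B (vs @ [x], es @ [e])"
  using assms steps_snoc[OF assms(2)] unfolding residual_path_def by auto

lemma residual_path_take:
  assumes "residual_path B (vs, es)" "length vs = Suc (length es)" "k < length vs"
  shows "residual_path B (take (Suc k) vs, take k es)"
  using assms steps_take[OF assms(2,3)] unfolding residual_path_def by (auto dest: in_set_takeD)

lemma residual_path_transfer:
  assumes "residual_path B W" "sys_edges B' \<subseteq> Y \<union> sys_edges B"
    and "\<And>e x y. traverses B e x y \<Longrightarrow> traverses B' e x y \<or> e \<notin> sys_edges B'"
    and "\<And>e x y. (e, x, y) \<in> set (steps W') \<Longrightarrow> e \<in> sys_edges B' \<Longrightarrow>
      (e, x, y) \<in> set (steps W) \<and> e \<notin> Y"
  shows "residual_path B' W'"
  unfolding residual_path_def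
proof (intro allI impI)
  fix e x y assume step: "(e, x, y) \<in> set (steps W')"
  show "e \<notin> sys_edges B' \<or> traverses B' e y x"
  proof (cases "e \<in> sys_edges B'")
    case True
    then have "(e, x, y) \<in> set (steps W)" "e \<notin> Y" using assms(4) step by auto
    then have "e \<notin> sys_edges B \<or> traverses B e y x"
      using assms(1) unfolding residual_path_def by blast
    then show ?thesis using assms(2,3) \<open>e \<notin> Y\<close> by blast
  qed simp
qed

lemma traverses_replace:
  assumes q: "(vs, es) \<in> B" and steps: "set (drop k (steps (vs, es))) \<subseteq> set (steps q')"
    and "traverses B e x y"
  shows "traverses (insert q' (B - {(vs, es)})) e x y \<or> e \<in> set (take k es)"
proof -
  obtain r where r: "r \<in> B" "(e, x, y) \<in> set (steps r)"
    using assms(3) unfolding traverses_def by blast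
  show ?thesis
  proof (cases "r = (vs, es)")
    case True
    then consider "(e, x, y) \<in> set (take k (steps (vs, es)))"
      | "(e, x, y) \<in> set (drop k (steps (vs, es)))"
      using r(2) by (metis UnE append_take_drop_id set_append)
    then show ?thesis
    proof cases
      case 1
      then show ?thesis using step_edge_in_take by fastforce
    next
      case 2
      then show ?thesis using steps by (auto intro: traversesI)
    qed
  next
    case False
    then show ?thesis using r by (auto intro: traversesI)
  qed
qed

lemma first_shared_edge:
  assumes res: "residual_path B (ws, wes)" and first: "hd wes \<notin> sys_edges B"
    and last: "last wes \<notin> sys_edges B" and shared: "set wes \<inter> sys_edges B \<noteq> {}"
  obtains i vs es j where "0 < i" "Suc i < length wes" "wes ! i \<in> sys_edges B"
    "set (take i wes) \<inter> sys_edges B = {}"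
    "(vs, es) \<in> B" "j < length es" "vs ! j = ws ! Suc i" "vs ! Suc j = ws ! i"
proof -
  obtain i where i: "0 < i" "Suc i < length wes" "wes ! i \<in> sys_edges B"
      "set (take i wes) \<inter> sys_edges B = {}"
    using first_index_in[OF shared first last] .
  have "(wes ! i, ws ! i, ws ! Suc i) \<in> set (steps (ws, wes))"
    using i(2) unfolding in_set_steps by (intro exI[of _ i]) simp
  then have "traverses B (wes ! i) (ws ! Suc i) (ws ! i)"
    using res i(3) unfolding residual_path_def by blast
  then obtain q where q: "q \<in> B" "(wes ! i, ws ! Suc i, ws ! i) \<in> set (steps q)"
    unfolding traverses_def by blast
  obtain vs es where q_eq: "q = (vs, es)" by (cases q)
  obtain j where "j < length es" "vs ! j = ws ! Suc i" "vs ! Suc j = ws ! i"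
    using q(2) unfolding q_eq in_set_steps by blast
  then show ?thesis using that[OF i] q(1) q_eq by blast
qed

text \<open>The augmenting path W first meets B in an edge wes ! i, which a path
  (vs, es) of B traverses backwards as es ! j. The path of B is replaced by the path following W
  until it first meets vs beyond its j-th vertex; the new augmenting path follows vs until it
  first meets W beyond its i-th vertex.\<close>

lemma swap_prefix:
  assumes B: "edge_disjoint_st_system V E I s t B" and q: "(vs, es) \<in> B"
    and W: "st_path V E I s t (ws, wes)"
    and i: "i < length wes" "set (take i wes) \<inter> sys_edges B = {}"
    and j: "j < length es" "vs ! Suc j = ws ! i"
  obtains k B' where "Suc j \<le> k" "edge_disjoint_st_system V E I s t B'"
    "sys_edges B' \<subseteq> set (take i wes) \<union> sys_edges B"
    "set (take k es) \<inter> sys_edges B' = {}"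
    "\<And>e x y. traverses B e x y \<Longrightarrow> traverses B' e x y \<or> e \<notin> sys_edges B'"
    "first_edge ` B' = insert (hd wes) (first_edge ` (B - {(vs, es)}))"
    "last_edge ` B' = last_edge ` B"
proof -
  have Q: "st_path V E I s t (vs, es)" using st_system_path[OF B q] .
  have "ws ! i \<in> set (drop (Suc j) vs)"
    using j st_path_length[OF Q] nth_in_set_drop[of "Suc j" "Suc j" vs] by simp
  then obtain a k where ak: "0 < a" "a \<le> i" "Suc j \<le> k" "k < length es"
    and q': "st_path V E I s t (splice_path (ws, wes) a (vs, es) k)"
      "first_edge (splice_path (ws, wes) a (vs, es) k) = hd wes"
      "last_edge (splice_path (ws, wes) a (vs, es) k) = last es"
      "steps (splice_path (ws, wes) a (vs, es) k) = take a (steps (ws, wes)) @ drop k (steps (vs, es))"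
    by (rule st_path_splice_first_meet[OF W Q i(1) zero_less_Suc])
  define B' where "B' = insert (splice_path (ws, wes) a (vs, es) k) (B - {(vs, es)})"
  have edges: "set (snd (splice_path (ws, wes) a (vs, es) k)) = set (take a wes) \<union> set (drop k es)"
    by (simp add: splice_path_def)
  have "set (take a wes) \<subseteq> set (take i wes)" using ak(2) by (simp add: set_take_subset_set_take)
  then have new: "set (take a wes) \<inter> sys_edges B = {}" using i(2) by blast
  have old: "set es \<subseteq> sys_edges B" using sys_edgesI[OF q] by auto
  have "set (take k es) \<inter> set (drop k es) = {}"
    using is_path_distinct_edges[of V E I vs es] Q by (simp add: st_path_def set_take_disj_set_drop_if_distinct)
  then have "set (snd (splice_path (ws, wes) a (vs, es) k)) \<inter> set (take k es) = {}"
    using edges new old by (auto dest: in_set_takeD)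
  then have unused: "set (take k es) \<inter> sys_edges B' = {}"
    unfolding B'_def by (rule replace_prefix_unused[OF B q])
  have own: "set (snd (splice_path (ws, wes) a (vs, es) k)) \<inter> sys_edges B \<subseteq> set (snd (vs, es))"
    using edges new by (auto dest: in_set_dropD)
  have "set (snd (splice_path (ws, wes) a (vs, es) k)) \<subseteq> set (take i wes) \<union> sys_edges B"
    using edges old \<open>set (take a wes) \<subseteq> set (take i wes)\<close> by (auto dest: in_set_dropD)
  then have B'_edges: "sys_edges B' \<subseteq> set (take i wes) \<union> sys_edges B"
    using sys_edges_replace[of _ B "(vs, es)"] unfolding B'_def by blast
  have steps: "set (drop k (steps (vs, es))) \<subseteq> set (steps (splice_path (ws, wes) a (vs, es) k))"
    using q'(4) by simp
  have "last_edge (splice_path (ws, wes) a (vs, es) k) = last_edge (vs, es)"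
    using q'(3) by (simp add: last_edge_def)
  then have "last_edge ` B' = last_edge ` B" unfolding B'_def by (rule image_insert_remove[OF q])
  moreover have "first_edge ` B' = insert (hd wes) (first_edge ` (B - {(vs, es)}))"
    using q'(2) by (simp add: B'_def)
  moreover have "edge_disjoint_st_system V E I s t B'"
    unfolding B'_def by (rule st_system_replace[OF B q q'(1) own])
  moreover have "traverses B' e x y \<or> e \<notin> sys_edges B'" if "traverses B e x y" for e x y
    using traverses_replace[OF q steps that] unused unfolding B'_def by blast
  ultimately show ?thesis using that[OF ak(3) _ B'_edges unused] by blast
qed

lemma swap_suffix:
  assumes W: "st_path V E I s t (ws, wes)" and res: "residual_path B (ws, wes)"
    and last: "last wes \<notin> sys_edges B"
    and Q: "st_path V E I s t (vs, es)"
    and i: "Suc i < length wes" and j: "j < length es" "vs ! j = ws ! Suc i"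
    and B'_edges: "sys_edges B' \<subseteq> set (take i wes) \<union> sys_edges B"
    and B'_unused: "set (take (Suc j) es) \<inter> sys_edges B' = {}"
    and B'_traverses: "\<And>e x y. traverses B e x y \<Longrightarrow> traverses B' e x y \<or> e \<notin> sys_edges B'"
  obtains W' where "st_path V E I s t W'" "residual_path B' W'"
    "first_edge W' = hd es" "first_edge W' \<notin> sys_edges B'"
    "last_edge W' = last wes" "last_edge W' \<notin> sys_edges B'"
    "set (snd W') \<inter> sys_edges B' \<subseteq> set wes \<inter> sys_edges B - {wes ! i}"
proof -
  have "vs ! j \<in> set (drop (Suc i) ws)"
    using i j st_path_length[OF W] nth_in_set_drop[of "Suc i" "Suc i" ws] by simp
  then obtain a p where ap: "0 < a" "a \<le> j" "Suc i \<le> p" "p < length wes"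
    and W': "st_path V E I s t (splice_path (vs, es) a (ws, wes) p)"
      "first_edge (splice_path (vs, es) a (ws, wes) p) = hd es"
      "last_edge (splice_path (vs, es) a (ws, wes) p) = last wes"
      "steps (splice_path (vs, es) a (ws, wes) p) = take a (steps (vs, es)) @ drop p (steps (ws, wes))"
    by (rule st_path_splice_first_meet[OF Q W j(1) zero_less_Suc])
  define W' where "W' = splice_path (vs, es) a (ws, wes) p"
  have edges: "set (snd W') = set (take a es) \<union> set (drop p wes)"
    by (simp add: W'_def splice_path_def)
  have prefix_unused: "set (take a es) \<inter> sys_edges B' = {}"
    using B'_unused ap(2) set_take_subset_set_take[of a "Suc j" es] by auto
  have "distinct wes"
    using is_path_distinct_edges[of V E I ws wes] W by (simp add: st_path_def)
  then have "set (take (Suc i) wes) \<inter> set (drop p wes) = {}"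
    using ap(3) by (rule set_take_disj_set_drop_if_distinct)
  moreover have "wes ! i \<in> set (take (Suc i) wes)" "set (take i wes) \<subseteq> set (take (Suc i) wes)"
    using i by (auto simp: take_Suc_conv_app_nth set_take_subset_set_take)
  ultimately have tail: "e \<in> sys_edges B \<and> e \<noteq> wes ! i \<and> e \<notin> set (take i wes)"
    if "e \<in> set (drop p wes)" "e \<in> sys_edges B'" for e
    using that B'_edges by blast
  show ?thesis
  proof (rule that)
    show "st_path V E I s t W'" "first_edge W' = hd es" "last_edge W' = last wes"
      using W'(1-3) by (simp_all add: W'_def)
    show "residual_path B' W'"
    proof (rule residual_path_transfer[OF res B'_edges B'_traverses])
      fix e x y assume step: "(e, x, y) \<in> set (steps W')" and used: "e \<in> sys_edges B'"
      have "(e, x, y) \<notin> set (take a (steps (vs, es)))"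
        using used prefix_unused step_edge_in_take[of e x y a "(vs, es)"] by auto
      then have "(e, x, y) \<in> set (drop p (steps (ws, wes)))" using step W'(4) by (simp add: W'_def)
      moreover have "e \<in> set (drop p wes)"
        using step_edge_in_drop[OF calculation] by simp
      ultimately show "(e, x, y) \<in> set (steps (ws, wes)) \<and> e \<notin> set (take i wes)"
        using tail used by (auto dest: in_set_dropD)
    qed
    have "es \<noteq> []" using j(1) by auto
    then have "hd es \<in> set (take a es)"
      using ap(1) hd_in_set[of "take a es"] by simp
    then show "first_edge W' \<notin> sys_edges B'"
      using W'(2) prefix_unused by (auto simp: W'_def)
    have "last wes \<in> set (drop p wes)"
      using ap(4) last_in_set[of "drop p wes"] by simp
    then show "last_edge W' \<notin> sys_edges B'"
      using W'(3) tail last by (auto simp: W'_def)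
    show "set (snd W') \<inter> sys_edges B' \<subseteq> set wes \<inter> sys_edges B - {wes ! i}"
      using edges prefix_unused tail by (auto dest: in_set_dropD)
  qed
qed

lemma augment_step:
  assumes B: "edge_disjoint_st_system V E I s t B"
    and W: "st_path V E I s t (ws, wes)" and res: "residual_path B (ws, wes)"
    and first: "hd wes \<notin> sys_edges B" and last: "last wes \<notin> sys_edges B"
    and shared: "set wes \<inter> sys_edges B \<noteq> {}"
  obtains B' W' where "edge_disjoint_st_system V E I s t B'" "st_path V E I s t W'"
    "residual_path B' W'" "first_edge W' \<notin> sys_edges B'" "last_edge W' \<notin> sys_edges B'"
    "card (set (snd W') \<inter> sys_edges B') < card (set wes \<inter> sys_edges B)"
    "insert (first_edge W') (first_edge ` B') = insert (hd wes) (first_edge ` B)"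
    "insert (last_edge W') (last_edge ` B') = insert (last wes) (last_edge ` B)"
proof -
  obtain i vs es j where i: "0 < i" "Suc i < length wes" "wes ! i \<in> sys_edges B"
      "set (take i wes) \<inter> sys_edges B = {}"
    and q: "(vs, es) \<in> B" and j: "j < length es" "vs ! j = ws ! Suc i" "vs ! Suc j = ws ! i"
    using first_shared_edge[OF res first last shared] .
  obtain k B' where k: "Suc j \<le> k" and B': "edge_disjoint_st_system V E I s t B'"
      "sys_edges B' \<subseteq> set (take i wes) \<union> sys_edges B"
      "set (take k es) \<inter> sys_edges B' = {}"
      "\<And>e x y. traverses B e x y \<Longrightarrow> traverses B' e x y \<or> e \<notin> sys_edges B'"
      "first_edge ` B' = insert (hd wes) (first_edge ` (B - {(vs, es)}))"
      "last_edge ` B' = last_edge ` B"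
    by (rule swap_prefix[OF B q W Suc_lessD[OF i(2)] i(4) j(1) j(3)]) blast
  have unused: "set (take (Suc j) es) \<inter> sys_edges B' = {}"
    using B'(3) k set_take_subset_set_take[of "Suc j" k es] by auto
  obtain W' where W': "st_path V E I s t W'" "residual_path B' W'"
      "first_edge W' = hd es" "first_edge W' \<notin> sys_edges B'"
      "last_edge W' = last wes" "last_edge W' \<notin> sys_edges B'"
      "set (snd W') \<inter> sys_edges B' \<subseteq> set wes \<inter> sys_edges B - {wes ! i}"
    using swap_suffix[OF W res last st_system_path[OF B q] i(2) j(1,2) B'(2)
      unused B'(4)] by blast
  have "card (set (snd W') \<inter> sys_edges B') \<le> card (set wes \<inter> sys_edges B - {wes ! i})"
    using W'(7) by (intro card_mono) auto
  also have "\<dots> < card (set wes \<inter> sys_edges B)"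
    using i(2,3) by (intro card_Diff1_less) auto
  finally have card: "card (set (snd W') \<inter> sys_edges B') < card (set wes \<inter> sys_edges B)" .
  have "first_edge ` B = insert (hd es) (first_edge ` (B - {(vs, es)}))"
    using image_remove_insert[OF q, of first_edge] by (simp add: first_edge_def)
  then have "insert (first_edge W') (first_edge ` B') = insert (hd wes) (first_edge ` B)"
    using B'(5) W'(3) by (simp add: insert_commute)
  moreover have "insert (last_edge W') (last_edge ` B') = insert (last wes) (last_edge ` B)"
    using B'(6) W'(5) by simp
  ultimately show ?thesis
    by (rule that[OF B'(1) W'(1,2,4,6) card])
qed

lemma augment:
  assumes "edge_disjoint_st_system V E I s t B" "st_path V E I s t W" "residual_path B W"
    and "first_edge W \<notin> sys_edges B" "last_edge W \<notin> sys_edges B"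
  obtains B' where "edge_disjoint_st_system V E I s t B'"
    "first_edge ` B' = insert (first_edge W) (first_edge ` B)"
    "last_edge ` B' = insert (last_edge W) (last_edge ` B)"
proof -
  have "\<exists>B'. edge_disjoint_st_system V E I s t B' \<and>
      first_edge ` B' = insert (first_edge W) (first_edge ` B) \<and>
      last_edge ` B' = insert (last_edge W) (last_edge ` B)"
    using assms
  proof (induction "card (set (snd W) \<inter> sys_edges B)" arbitrary: B W rule: less_induct)
    case less
    obtain ws wes where W: "W = (ws, wes)" by (cases W)
    show ?case
    proof (cases "set wes \<inter> sys_edges B = {}")
      case True
      then have "edge_disjoint_st_system V E I s t (insert W B)"
        using st_system_insert[OF less.prems(1,2)] W by simp
      then show ?thesis by auto
    next
      case False
      obtain B' W' where B': "edge_disjoint_st_system V E I s t B'" "st_path V E I s t W'"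
          "residual_path B' W'" "first_edge W' \<notin> sys_edges B'" "last_edge W' \<notin> sys_edges B'"
          "card (set (snd W') \<inter> sys_edges B') < card (set wes \<inter> sys_edges B)"
          "insert (first_edge W') (first_edge ` B') = insert (hd wes) (first_edge ` B)"
          "insert (last_edge W') (last_edge ` B') = insert (last wes) (last_edge ` B)"
        using augment_step[OF less.prems(1) less.prems(2-5)[unfolded W first_edge_def last_edge_def,
            simplified] False] by blast
      have "card (set (snd W') \<inter> sys_edges B') < card (set (snd W) \<inter> sys_edges B)"
        using B'(6) W by simp
      then show ?thesis
        using less.hyps[OF _ B'(1-5)] B'(7,8) W by (simp add: first_edge_def last_edge_def)
    qed
  qed
  then show ?thesis using that by blast
qed

definition residual_reach ::
  "'v set \<Rightarrow> 'e set \<Rightarrow> ('e \<Rightarrow> 'v set) \<Rightarrow> 'v \<Rightarrow> 'v \<Rightarrow> ('v list \<times> 'e list) set \<Rightarrow> 'v set" where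
  "residual_reach V E I s t B = {v. \<exists>vs es. is_path V E I (vs, es) \<and> hd vs = s \<and> last vs = v \<and>
     t \<notin> set vs \<and> residual_path B (vs, es)}"

definition residual_closed ::
  "'e set \<Rightarrow> ('e \<Rightarrow> 'v set) \<Rightarrow> ('v list \<times> 'e list) set \<Rightarrow> 'v \<Rightarrow> 'v set \<Rightarrow> bool" where
  "residual_closed E I B t S \<longleftrightarrow> (\<forall>e\<in>E. \<forall>x y. y \<in> S \<longrightarrow> x \<noteq> t \<longrightarrow> I e = {x, y} \<longrightarrow>
     (e \<notin> sys_edges B \<or> traverses B e x y) \<longrightarrow> x \<in> S)"

lemma start_in_residual_reach:
  assumes "s \<in> V" "s \<noteq> t"
  shows "s \<in> residual_reach V E I s t B"
proof -
  have "is_path V E I ([s], [])" "residual_path B ([s], [])"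
    using assms(1) by (simp_all add: is_path_iff steps_def residual_path_def)
  then show ?thesis using assms(2) unfolding residual_reach_def by force
qed

lemma target_notin_residual_reach: "t \<notin> residual_reach V E I s t B"
  by (auto simp: residual_reach_def is_path_def)

lemma residual_closed_residual_reach:
  assumes "is_graph V E I"
  shows "residual_closed E I B t (residual_reach V E I s t B)"
  unfolding residual_closed_def
proof (intro ballI allI impI)
  fix e x y
  assume e: "e \<in> E" and y: "y \<in> residual_reach V E I s t B" and "x \<noteq> t" "I e = {x, y}"
    and usable: "e \<notin> sys_edges B \<or> traverses B e x y"
  obtain vs es where W: "is_path V E I (vs, es)" "hd vs = s" "last vs = y" "t \<notin> set vs"
      "residual_path B (vs, es)"
    using y unfolding residual_reach_def by blast
  have len: "length vs = Suc (length es)" using W(1) by (simp add: is_path_iff)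
  show "x \<in> residual_reach V E I s t B"
  proof (cases "x \<in> set vs")
    case True
    then obtain k where k: "k < length vs" "vs ! k = x" by (auto simp: in_set_conv_nth)
    have "hd (take (Suc k) vs) = s" using W(2) by simp
    moreover have "last (take (Suc k) vs) = x" using k by (simp add: take_Suc_conv_app_nth)
    moreover have "t \<notin> set (take (Suc k) vs)" using W(4) by (auto dest: in_set_takeD)
    ultimately show ?thesis
      using is_path_take[OF W(1) k(1)] residual_path_take[OF W(5) len k(1)]
      unfolding residual_reach_def by blast
  next
    case False
    have "x \<in> V" using assms e \<open>I e = {x, y}\<close> unfolding is_graph_def by blast
    then have "is_path V E I (vs @ [x], es @ [e])"
      using is_path_snoc[OF W(1) False _ e] W(3) \<open>I e = {x, y}\<close> by (simp add: insert_commute)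
    moreover have "residual_path B (vs @ [x], es @ [e])"
      using residual_path_snoc[OF W(5) len] usable W(3) by simp
    moreover have "hd (vs @ [x]) = s" "t \<notin> set (vs @ [x])"
      using W(2,4) len \<open>x \<noteq> t\<close> by (cases vs; simp)+
    ultimately show ?thesis unfolding residual_reach_def by force
  qed
qed

lemma augmenting_path_to_target:
  assumes B: "edge_disjoint_st_system V E I s t B" and "t \<in> V" "s \<noteq> t"
    and u: "u \<in> residual_reach V E I s t B"
    and h: "h \<in> E" "I h = {u, t}" "h \<notin> sys_edges B"
  obtains W where "st_path V E I s t W" "residual_path B W"
    "first_edge W \<notin> sys_edges B" "last_edge W = h"
proof -
  obtain vs es where P: "is_path V E I (vs, es)" "hd vs = s" "last vs = u" "t \<notin> set vs"
      "residual_path B (vs, es)"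
    using u unfolding residual_reach_def by blast
  have len: "length vs = Suc (length es)" using P(1) by (simp add: is_path_iff)
  define W where "W = (vs @ [t], es @ [h])"
  have "is_path V E I W"
    unfolding W_def using is_path_snoc[OF P(1,4) \<open>t \<in> V\<close> h(1)] P(3) h(2) by simp
  moreover have "hd (vs @ [t]) = s" using P(2) len by (cases vs) simp_all
  ultimately have W: "st_path V E I s t W" by (simp add: W_def st_path_def)
  have res: "residual_path B W"
    unfolding W_def using residual_path_snoc[OF P(5) len] h(3) by simp
  have "last_edge W = h" by (simp add: W_def last_edge_def)
  then show ?thesis
    using that[OF W res residual_first_edge_unused[OF B W \<open>s \<noteq> t\<close> res]] by blast
qed

section \<open>Rerouting across a cut\<close>

definition exits_at :: "'v set \<Rightarrow> 'v list \<times> 'e list \<Rightarrow> nat \<Rightarrow> bool" where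
  "exits_at S q j \<longleftrightarrow> j < length (snd q) \<and> fst q ! j \<in> S \<and> set (drop (Suc j) (fst q)) \<inter> S = {}"

lemma exits_at_unique:
  assumes "exits_at S q j" "exits_at S q j'" "length (fst q) = Suc (length (snd q))"
  shows "j = j'"
proof -
  have "\<not> k < k'" if "exits_at S q k" "exits_at S q k'" for k k'
  proof
    assume "k < k'"
    then have "fst q ! k' \<in> set (drop (Suc k) (fst q))"
      using that(2) assms(3) by (intro nth_in_set_drop) (auto simp: exits_at_def)
    then show False using that unfolding exits_at_def by blast
  qed
  then show ?thesis using assms(1,2) by (meson linorder_neqE_nat)
qed

lemma residual_closed_exit:
  assumes B: "edge_disjoint_st_system V E I s t B" and closed: "residual_closed E I B t S"
    and q: "(vs, es) \<in> B" and j: "j < length es" "vs ! Suc j \<notin> S"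
  shows "set (drop (Suc j) vs) \<inter> S = {}"
proof -
  note path = st_system_path[OF B q]
  have len: "length vs = Suc (length es)" using st_path_length[OF path] .
  have "vs ! m \<notin> S" if "Suc j \<le> m" "m < length vs" for m
    using that
  proof (induction m rule: dec_induct)
    case base
    then show ?case using j(2) by simp
  next
    case (step m)
    show ?case
    proof
      assume "vs ! Suc m \<in> S"
      have m: "m < length es" using step.prems len by simp
      have "vs ! m \<noteq> t" using st_path_nth_eq_t[OF path, of m] m len by simp
      moreover have "(es ! m, vs ! m, vs ! Suc m) \<in> set (steps (vs, es))"
        using m unfolding in_set_steps by blast
      then have "traverses B (es ! m) (vs ! m) (vs ! Suc m)" by (rule traversesI[OF q])
      ultimately have "vs ! m \<in> S"
        using closed \<open>vs ! Suc m \<in> S\<close> st_path_edge_ends[OF path m] unfolding residual_closed_def by blast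
      then show False using step.IH step.prems by simp
    qed
  qed
  then show ?thesis by (auto simp: in_set_conv_nth)
qed

lemma crossing_edge_exit:
  assumes B: "edge_disjoint_st_system V E I s t B" and closed: "residual_closed E I B t S"
    and x: "x \<in> S" and y: "y \<notin> S" "y \<noteq> t" and e: "e \<in> E" "I e = {x, y}"
  obtains ws ds j where "(ws, ds) \<in> B" "exits_at S (ws, ds) j" "ds ! j = e" "ws ! j = x"
    "ws ! Suc j = y"
proof -
  have "I e = {y, x}" using e(2) by (simp add: insert_commute)
  then have "\<not> (e \<notin> sys_edges B \<or> traverses B e y x)"
    using closed x y e(1) unfolding residual_closed_def by blast
  then have "traverses B e x y" using traverses_either_way[OF B _ e(2)] by blast
  then obtain q where q: "q \<in> B" "(e, x, y) \<in> set (steps q)"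
    unfolding traverses_def by blast
  obtain ws ds where q_eq: "q = (ws, ds)" by (cases q)
  obtain j where j: "j < length ds" "ds ! j = e" "ws ! j = x" "ws ! Suc j = y"
    using q(2) unfolding q_eq in_set_steps by blast
  have "set (drop (Suc j) ws) \<inter> S = {}"
    using residual_closed_exit[OF B closed q(1)[unfolded q_eq] j(1)] j(4) y(1) by simp
  then have "exits_at S (ws, ds) j" using j(1,3) x by (simp add: exits_at_def)
  then show ?thesis using that q(1) j(2-4) unfolding q_eq by blast
qed

text \<open>The edges allowed on the rerouted copy of a path es of P: edges of es touching S, and edges
  of a path of B beyond the point where it leaves S for good through an edge of es. Either kind of
  edge determines es (lemma reroute_edge_owner).\<close>

definition reroute_edge ::
  "('v list \<times> 'e list) set \<Rightarrow> 'v set \<Rightarrow> ('e \<Rightarrow> 'v set) \<Rightarrow> 'e list \<Rightarrow> 'e \<Rightarrow> bool" where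
  "reroute_edge B S I es e \<longleftrightarrow> (e \<in> set es \<and> I e \<inter> S \<noteq> {}) \<or>
     (\<exists>q\<in>B. \<exists>j. exits_at S q j \<and> snd q ! j \<in> set es \<and> e \<in> set (drop (Suc j) (snd q)))"

lemma prefix_edges_touch:
  assumes p: "st_path V E I s t (vs, es)" and S: "set (take (Suc i) vs) \<subseteq> S" and i: "i < length es"
  shows "e \<in> set (take (Suc i) es) \<Longrightarrow> I e \<inter> S \<noteq> {}"
proof -
  assume "e \<in> set (take (Suc i) es)"
  then obtain m where "m < length (take (Suc i) es)" "take (Suc i) es ! m = e"
    unfolding in_set_conv_nth by blast
  then have m: "m \<le> i" "e = es ! m" using i by auto
  have "vs ! m \<in> I e" using st_path_edge_ends(1)[OF p] m i by simp
  moreover have "vs ! m \<in> S"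
    using S nth_in_set_take[of m "Suc i" vs] m i st_path_length[OF p] by auto
  ultimately show ?thesis by blast
qed

lemma reroute_edges_at_exit:
  assumes p: "st_path V E I s t (vs, es)" and i: "i < length es" "set (take (Suc i) vs) \<subseteq> S"
    and q: "(ws, ds) \<in> B" "exits_at S (ws, ds) j" "ds ! j = es ! i"
  shows "\<forall>e \<in> set (take i es) \<union> set (drop j ds). reroute_edge B S I es e"
proof
  fix e assume e: "e \<in> set (take i es) \<union> set (drop j ds)"
  have "j < length ds" using q(2) by (simp add: exits_at_def)
  then have "drop j ds = ds ! j # drop (Suc j) ds" by (simp add: Cons_nth_drop_Suc)
  moreover have "ds ! j \<in> set (take (Suc i) es)" using q(3) i(1) nth_in_set_take[of i "Suc i" es] by simp
  moreover have "set (take i es) \<subseteq> set (take (Suc i) es)" by (simp add: set_take_subset_set_take)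
  ultimately have "e \<in> set (take (Suc i) es) \<or> e \<in> set (drop (Suc j) ds)" using e by auto
  then show "reroute_edge B S I es e"
  proof
    assume "e \<in> set (take (Suc i) es)"
    then show ?thesis
      using prefix_edges_touch[OF p i(2,1)] unfolding reroute_edge_def by (auto dest: in_set_takeD)
  next
    assume "e \<in> set (drop (Suc j) ds)"
    then show ?thesis
      unfolding reroute_edge_def using q(2,3) i(1) by (intro disjI2 bexI[OF _ q(1)] exI[of _ j]) simp
  qed
qed

lemma reroute_at_exit:
  assumes B: "edge_disjoint_st_system V E I s t B" and closed: "residual_closed E I B t S"
    and p: "st_path V E I s t (vs, es)"
    and i: "i < length es" "set (take (Suc i) vs) \<subseteq> S" "vs ! Suc i \<notin> S" "vs ! Suc i \<noteq> t"
  obtains r where "st_path V E I s t r" "first_edge r = first_edge (vs, es)"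
    "last_edge r \<in> last_edge ` B" "\<forall>e\<in>set (snd r). reroute_edge B S I es e"
proof -
  have len: "length vs = Suc (length es)" using st_path_length[OF p] .
  have vi: "vs ! i \<in> S" using i(1,2) len nth_in_set_take[of i "Suc i" vs] by auto
  obtain ws ds j where q: "(ws, ds) \<in> B" "exits_at S (ws, ds) j"
      and j: "ds ! j = es ! i" "ws ! j = vs ! i" "ws ! Suc j = vs ! Suc i"
    using crossing_edge_exit[OF B closed vi i(3,4) st_path_edge_ends(2,1)[OF p i(1)]] .
  have j_len: "j < length ds" and out: "set (drop (Suc j) ws) \<inter> S = {}"
    using q(2) by (simp_all add: exits_at_def)
  note Q = st_system_path[OF B q(1)]
  have "distinct vs" using p by (simp add: st_path_def is_path_iff)
  then have "vs ! i \<notin> set (take i vs)"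
    using i(1) len by (auto simp: in_set_conv_nth nth_eq_iff_index_eq)
  moreover have "set (take i vs) \<subseteq> S"
    using i(2) set_take_subset_set_take[of i "Suc i" vs] by auto
  moreover have "drop j ws = ws ! j # drop (Suc j) ws"
    using j_len st_path_length[OF Q] by (simp add: Cons_nth_drop_Suc)
  ultimately have disj: "set (take i vs) \<inter> set (drop j ws) = {}" using out j(2) by auto
  define r where "r = splice_path (vs, es) i (ws, ds) j"
  have "st_path V E I s t r"
    unfolding r_def by (rule st_path_splice[OF p Q]) (use i(1) j_len j(2) disj in auto)
  moreover have "first_edge r = first_edge (vs, es)"
  proof (cases "i = 0")
    case True
    then show ?thesis
      using i(1) j_len j(1) by (simp add: r_def splice_path_def first_edge_def hd_drop_conv_nth hd_conv_nth)
  next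
    case False
    have "es \<noteq> []" using i(1) by auto
    then show ?thesis using False unfolding r_def by (simp add: first_edge_splice)
  qed
  moreover have "last_edge r \<in> last_edge ` B"
    unfolding r_def last_edge_splice[OF j_len] using q(1) by simp
  moreover have "\<forall>e\<in>set (snd r). reroute_edge B S I es e"
    using reroute_edges_at_exit[OF p i(1,2) q j(1)] by (simp add: r_def splice_path_def)
  ultimately show ?thesis by (rule that)
qed

lemma reroute_across_cut:
  assumes "s \<noteq> t" and B: "edge_disjoint_st_system V E I s t B" and closed: "residual_closed E I B t S"
    and "s \<in> S" "t \<notin> S" and p: "st_path V E I s t (vs, es)"
  obtains r where "st_path V E I s t r" "first_edge r = first_edge (vs, es)"
    "last_edge r \<in> last_edge ` B \<or> (last_edge r \<in> set es \<and> (\<exists>x\<in>S. I (last_edge r) = {x, t}))"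
    "\<forall>e\<in>set (snd r). reroute_edge B S I es e"
proof -
  have len: "length vs = Suc (length es)" using st_path_length[OF p] .
  have "vs ! 0 \<in> S" "vs ! length es \<notin> S"
    using st_path_nth_eq_s[OF p, of 0] st_path_nth_eq_t[OF p, of "length es"] len \<open>s \<in> S\<close> \<open>t \<notin> S\<close>
    by simp_all
  then obtain i where i: "i < length es" "set (take (Suc i) vs) \<subseteq> S" "vs ! Suc i \<notin> S"
    using first_exit[of vs S "length es"] len by auto
  show ?thesis
  proof (cases "vs ! Suc i = t")
    case True
    then have i_last: "Suc i = length es" using st_path_nth_eq_t[OF p, of "Suc i"] i(1) len by simp
    then have "es \<noteq> []" "i = length es - 1" by auto
    then have "last_edge (vs, es) = es ! i" by (simp add: last_edge_def last_conv_nth)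
    moreover have "I (es ! i) = {vs ! i, t}" using st_path_edge_ends(1)[OF p i(1)] True by simp
    moreover have "vs ! i \<in> S" using i(1,2) len nth_in_set_take[of i "Suc i" vs] by auto
    moreover have "es ! i \<in> set es" using i(1) by simp
    moreover have "\<forall>e\<in>set es. reroute_edge B S I es e"
      using prefix_edges_touch[OF p i(2,1)] i_last by (simp add: reroute_edge_def)
    ultimately show ?thesis using that[OF p refl] by auto
  next
    case False
    obtain r where r: "st_path V E I s t r" "first_edge r = first_edge (vs, es)"
        "last_edge r \<in> last_edge ` B" "\<forall>e\<in>set (snd r). reroute_edge B S I es e"
      using reroute_at_exit[OF B closed p i False] .
    show ?thesis by (rule that[OF r(1,2) disjI1[OF r(3)] r(4)])
  qed
qed

lemma reroute_edge_detached:
  assumes B: "edge_disjoint_st_system V E I s t B" and "q \<in> B" "exits_at S q j"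
    and "e \<in> set (drop (Suc j) (snd q))"
  shows "I e \<inter> S = {}"
proof -
  obtain ws ds where q: "q = (ws, ds)" by (cases q)
  have "is_path V E I (ws, ds)" using st_system_path[OF B \<open>q \<in> B\<close>] q by (simp add: st_path_def)
  then have "I e \<subseteq> set (drop (Suc j) ws)" using edge_ends_in_drop assms(4) q by simp
  then show ?thesis using assms(3) q by (auto simp: exits_at_def)
qed

lemma reroute_edge_owner:
  assumes B: "edge_disjoint_st_system V E I s t B" and P: "edge_disjoint_st_system V E I s t P"
    and p: "p \<in> P" "p' \<in> P"
    and e: "reroute_edge B S I (snd p) e" "reroute_edge B S I (snd p') e"
  shows "p = p'"
proof (cases "e \<in> set (snd p) \<and> I e \<inter> S \<noteq> {}")
  case True
  have "e \<in> set (snd p')"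
  proof (rule ccontr)
    assume "e \<notin> set (snd p')"
    then obtain q j where "q \<in> B" "exits_at S q j" "e \<in> set (drop (Suc j) (snd q))"
      using e(2) unfolding reroute_edge_def by blast
    then have "I e \<inter> S = {}" by (rule reroute_edge_detached[OF B])
    then show False using True by simp
  qed
  then show ?thesis using st_system_edge_unique[OF P p conjunct1[OF True]] by simp
next
  case False
  then obtain q j where q: "q \<in> B" "exits_at S q j" "snd q ! j \<in> set (snd p)"
      "e \<in> set (drop (Suc j) (snd q))"
    using e(1) unfolding reroute_edge_def by blast
  have "I e \<inter> S = {}" using reroute_edge_detached[OF B q(1,2,4)] .
  then obtain q' j' where q': "q' \<in> B" "exits_at S q' j'" "snd q' ! j' \<in> set (snd p')"
      "e \<in> set (drop (Suc j') (snd q'))"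
    using e(2) unfolding reroute_edge_def by blast
  have "q = q'"
    using st_system_edge_unique[OF B q(1) q'(1) in_set_dropD[OF q(4)] in_set_dropD[OF q'(4)]] .
  moreover obtain ws ds where "q = (ws, ds)" by (cases q)
  then have "length (fst q) = Suc (length (snd q))"
    using st_path_length st_system_path[OF B q(1)] by simp
  ultimately have "j = j'" using exits_at_unique[OF q(2)] q'(2) by simp
  then show ?thesis using st_system_edge_unique[OF P p q(3)] q'(3) \<open>q = q'\<close> by simp
qed

lemma reroute_system_across_cut:
  fixes B P :: "('v list \<times> 'e list) set"
  assumes "s \<noteq> t" and B: "edge_disjoint_st_system V E I s t B"
    and P: "edge_disjoint_st_system V E I s t P"
    and closed: "residual_closed E I B t S" and "s \<in> S" "t \<notin> S"
  obtains R where "edge_disjoint_st_system V E I s t R" "first_edge ` R = first_edge ` P"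
    "\<forall>r\<in>R. last_edge r \<in> last_edge ` B \<or>
       (last_edge r \<in> sys_edges P \<and> (\<exists>x\<in>S. I (last_edge r) = {x, t}))"
proof -
  define good where "good p r \<longleftrightarrow> st_path V E I s t r \<and> first_edge r = first_edge p \<and>
      (last_edge r \<in> last_edge ` B \<or> (last_edge r \<in> sys_edges P \<and> (\<exists>x\<in>S. I (last_edge r) = {x, t}))) \<and>
      (\<forall>e\<in>set (snd r). reroute_edge B S I (snd p) e)" for p r :: "'v list \<times> 'e list"
  have "\<forall>p\<in>P. \<exists>r. good p r"
  proof
    fix p assume "p \<in> P"
    obtain vs es where p: "p = (vs, es)" by (cases p)
    obtain r where "st_path V E I s t r" "first_edge r = first_edge (vs, es)"
        "last_edge r \<in> last_edge ` B \<or> (last_edge r \<in> set es \<and> (\<exists>x\<in>S. I (last_edge r) = {x, t}))"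
        "\<forall>e\<in>set (snd r). reroute_edge B S I es e"
      using reroute_across_cut[OF assms(1) B closed assms(5,6) st_system_path[OF P \<open>p \<in> P\<close>, unfolded p]] .
    moreover have "set es \<subseteq> sys_edges P" using sys_edgesI[OF \<open>p \<in> P\<close>] p by auto
    ultimately have "good p r" unfolding good_def p by auto
    then show "\<exists>r. good p r" ..
  qed
  from bchoice[OF this] obtain F where F: "\<forall>p\<in>P. good p (F p)" ..
  then have F_good: "good p (F p)" if "p \<in> P" for p using that by simp
  have "edge_disjoint_st_system V E I s t (F ` P)"
  proof (rule st_system_image)
    show "st_path V E I s t (F p)" if "p \<in> P" for p using F_good[OF that] unfolding good_def by simp
    show "p = p'" if "p \<in> P" "p' \<in> P" "e \<in> set (snd (F p))" "e \<in> set (snd (F p'))" for p p' e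
    proof (rule reroute_edge_owner[OF B P that(1,2)])
      show "reroute_edge B S I (snd p) e" "reroute_edge B S I (snd p') e"
        using F_good[OF that(1)] F_good[OF that(2)] that(3,4) unfolding good_def by simp_all
    qed
  qed
  moreover have "first_edge ` F ` P = first_edge ` P"
  proof -
    have "(\<lambda>p. first_edge (F p)) ` P = first_edge ` P"
      using F_good unfolding good_def by (intro image_cong) simp_all
    then show ?thesis by (simp add: image_image)
  qed
  moreover have "\<forall>r\<in>F ` P. last_edge r \<in> last_edge ` B \<or>
       (last_edge r \<in> sys_edges P \<and> (\<exists>x\<in>S. I (last_edge r) = {x, t}))"
    using F unfolding good_def by blast
  ultimately show ?thesis by (rule that)
qed

section \<open>Exchanging ends at the sink\<close>

lemma linkage_by_augmenting:
  assumes G: "is_grapht V E I s t" and B: "edge_disjoint_st_system V E I s t B"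
    and first: "delta E I s \<subseteq> insert e0 (first_edge ` B)"
    and h: "h \<in> delta E I t" "h \<notin> sys_edges B" "u \<in> residual_reach V E I s t B" "I h = {u, t}"
  obtains L where "linkage V E I s t L" "delta_sys E I L t = insert h (delta_sys E I B t)"
proof -
  have st: "s \<noteq> t" and "t \<in> V" using G by (auto simp: is_grapht_def)
  have "h \<in> E" using h(1) by (simp add: delta_def)
  obtain W where W: "st_path V E I s t W" "residual_path B W"
      "first_edge W \<notin> sys_edges B" "last_edge W = h"
    using augmenting_path_to_target[OF B \<open>t \<in> V\<close> st h(3) \<open>h \<in> E\<close> h(4,2)] .
  obtain L where L: "edge_disjoint_st_system V E I s t L"
      "first_edge ` L = insert (first_edge W) (first_edge ` B)"
      "last_edge ` L = insert (last_edge W) (last_edge ` B)"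
    using augment[OF B W(1,2,3)] W(4) h(2) by blast
  have "first_edge W \<in> delta E I s" using st_path_end_edges(1)[OF W(1) st] .
  then have "first_edge W = e0"
    using first W(3) first_edges_used[OF st B] by blast
  then have "linkage V E I s t L"
    using linkage_iff_first_edges[OF st L(1)] first L(2) by simp
  moreover have "delta_sys E I L t = insert h (delta_sys E I B t)"
    using delta_sys_eq_last_edges[OF st L(1)] delta_sys_eq_last_edges[OF st B] L(3) W(4) by simp
  ultimately show ?thesis by (rule that)
qed

lemma linkage_by_rerouting:
  assumes G: "is_grapht V E I s t" and B: "edge_disjoint_st_system V E I s t B"
    and P: "linkage V E I s t P"
    and cut: "\<And>h u. h \<in> delta E I t \<Longrightarrow> h \<in> sys_edges P \<Longrightarrow> u \<in> residual_reach V E I s t B \<Longrightarrow>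
      I h = {u, t} \<Longrightarrow> h \<in> sys_edges B"
  obtains L where "linkage V E I s t L" "delta_sys E I L t \<subseteq> delta_sys E I B t"
proof -
  have st: "s \<noteq> t" and "s \<in> V" "is_graph V E I" using G by (auto simp: is_grapht_def)
  have P_sys: "edge_disjoint_st_system V E I s t P" using P by (simp add: linkage_def links_def)
  obtain R where R: "edge_disjoint_st_system V E I s t R" "first_edge ` R = first_edge ` P"
      "\<forall>r\<in>R. last_edge r \<in> last_edge ` B \<or> (last_edge r \<in> sys_edges P \<and>
         (\<exists>x\<in>residual_reach V E I s t B. I (last_edge r) = {x, t}))"
    using reroute_system_across_cut[OF st B P_sys residual_closed_residual_reach[OF \<open>is_graph V E I\<close>]
        start_in_residual_reach[OF \<open>s \<in> V\<close> st] target_notin_residual_reach] .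
  have "linkage V E I s t R"
    using linkage_iff_first_edges[OF st R(1)] linkage_iff_first_edges[OF st P_sys] P R(2) by simp
  moreover have "last_edge r \<in> last_edge ` B" if "r \<in> R" for r
  proof -
    have "last_edge r \<in> delta E I t"
      using st_path_end_edges(3)[OF st_system_path[OF R(1) that] st] .
    then have "last_edge r \<in> delta_sys E I B t \<or> last_edge r \<in> last_edge ` B"
      using R(3) that cut unfolding delta_sys_def by blast
    then show ?thesis using delta_sys_eq_last_edges[OF st B] by blast
  qed
  then have "delta_sys E I R t \<subseteq> delta_sys E I B t"
    using delta_sys_eq_last_edges[OF st R(1)] delta_sys_eq_last_edges[OF st B] by auto
  ultimately show ?thesis by (rule that)
qed

lemma linkage_avoiding_edge:
  assumes G: "is_grapht V E I s t" and B: "edge_disjoint_st_system V E I s t B"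
    and first: "delta E I s \<subseteq> insert e0 (first_edge ` B)"
    and P: "linkage V E I s t P" and f: "f \<notin> sys_edges P" "f \<notin> sys_edges B"
  obtains L h where "linkage V E I s t L" "f \<notin> delta_sys E I L t"
    "delta_sys E I L t \<subseteq> insert h (delta_sys E I B t)"
proof (cases "\<exists>h u. h \<in> delta E I t \<and> h \<notin> sys_edges B \<and> h \<noteq> f \<and>
    u \<in> residual_reach V E I s t B \<and> I h = {u, t}")
  case True
  then obtain h u where h: "h \<in> delta E I t" "h \<notin> sys_edges B" "h \<noteq> f"
      "u \<in> residual_reach V E I s t B" "I h = {u, t}"
    by blast
  obtain L where L: "linkage V E I s t L" "delta_sys E I L t = insert h (delta_sys E I B t)"
    using linkage_by_augmenting[OF G B first h(1,2,4,5)] .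
  have "f \<notin> delta_sys E I L t" using L(2) h(3) f(2) by (simp add: delta_sys_def)
  then show ?thesis using that[OF L(1)] L(2) by blast
next
  case False
  obtain L where L: "linkage V E I s t L" "delta_sys E I L t \<subseteq> delta_sys E I B t"
    using linkage_by_rerouting[OF G B P] False f(1) by blast
  have "f \<notin> delta_sys E I L t" using L(2) f(2) by (auto simp: delta_sys_def)
  then show ?thesis using that[OF L(1)] L(2) by blast
qed

lemma linkage_avoiding_edge_of_linkage:
  assumes G: "is_grapht V E I s t" and P: "linkage V E I s t P" "f \<notin> sys_edges P"
    and Q: "linkage V E I s t Q"
  obtains L h where "linkage V E I s t L" "f \<notin> delta_sys E I L t"
    "delta E I t - sys_edges Q - {h} \<subseteq> delta E I t - {f} - delta_sys E I L t"
proof (cases "f \<in> sys_edges Q")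
  case True
  have st: "s \<noteq> t" using G by (simp add: is_grapht_def)
  have Q_sys: "edge_disjoint_st_system V E I s t Q" using Q by (simp add: linkage_def links_def)
  obtain q where q: "q \<in> Q" "f \<in> set (snd q)" using True by (rule sys_edgesE)
  have B: "edge_disjoint_st_system V E I s t (Q - {q})" by (rule st_system_subset[OF Q_sys]) auto
  have "f \<notin> sys_edges (Q - {q})"
  proof
    assume "f \<in> sys_edges (Q - {q})"
    then obtain r where "r \<in> Q - {q}" "f \<in> set (snd r)" by (rule sys_edgesE)
    then show False using st_system_edge_unique[OF Q_sys _ q(1) _ q(2)] by blast
  qed
  moreover have "delta E I s \<subseteq> insert (first_edge q) (first_edge ` (Q - {q}))"
    using linkage_iff_first_edges[OF st Q_sys] Q image_remove_insert[OF q(1), of first_edge]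
    by simp
  ultimately obtain L h where L: "linkage V E I s t L" "f \<notin> delta_sys E I L t"
      "delta_sys E I L t \<subseteq> insert h (delta_sys E I (Q - {q}) t)"
    using linkage_avoiding_edge[OF G B _ P] by blast
  moreover have "delta_sys E I (Q - {q}) t \<subseteq> delta_sys E I Q t"
    by (auto simp: delta_sys_def sys_edges_def)
  ultimately show ?thesis
    using that[OF L(1,2), of h] True by (auto simp: delta_sys_def)
next
  case False
  then show ?thesis using that[OF Q, of f] by (auto simp: delta_sys_def)
qed

lemma minimal_linkage_ends:
  assumes "\<not> (\<exists>P'. linkage V E I s t P' \<and> delta_sys E I P' t \<subset> delta_sys E I P t)"
    and "delta_sys E I P t = delta E I t - {f}"
    and "linkage V E I s t L" "f \<notin> delta_sys E I L t"
  shows "delta E I t - {f} \<subseteq> delta_sys E I L t"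
proof -
  have "delta_sys E I L t \<subseteq> delta_sys E I P t" using assms(2,4) by (auto simp: delta_sys_def)
  then show ?thesis using assms(1-3) by blast
qed

theorem lemma3p9:
  fixes V :: "'v set" and E :: "'e set" and I :: "'e \<Rightarrow> 'v set" and s t :: 'v
    and P :: "('v list \<times> 'e list) set"
  assumes "is_grapht V E I s t"
    and "linkage V E I s t P"
    and "card (delta E I t - sys_edges P) = 1"
    and "\<not> (\<exists>P'. linkage V E I s t P' \<and> delta_sys E I P' t \<subset> delta_sys E I P t)"
  shows "\<forall>Q. linkage V E I s t Q \<longrightarrow>
           finite (delta E I t - sys_edges Q) \<and> card (delta E I t - sys_edges Q) \<le> 1"
proof (intro allI impI)
  fix Q assume Q: "linkage V E I s t Q"
  obtain f where "delta E I t - sys_edges P = {f}" using assms(3) by (rule card_1_singletonE)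
  then have P_ends: "delta_sys E I P t = delta E I t - {f}" and "f \<notin> sys_edges P"
    by (auto simp: delta_sys_def)
  obtain L h where L: "linkage V E I s t L" "f \<notin> delta_sys E I L t"
      "delta E I t - sys_edges Q - {h} \<subseteq> delta E I t - {f} - delta_sys E I L t"
    using linkage_avoiding_edge_of_linkage[OF assms(1,2) \<open>f \<notin> sys_edges P\<close> Q] .
  have "delta E I t - {f} \<subseteq> delta_sys E I L t"
    using minimal_linkage_ends[OF assms(4) P_ends L(1,2)] .
  then have missing: "delta E I t - sys_edges Q \<subseteq> {h}" using L(3) by blast
  show "finite (delta E I t - sys_edges Q) \<and> card (delta E I t - sys_edges Q) \<le> 1"
    using finite_subset[OF missing] card_mono[OF _ missing] by simp
qed

end
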